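(* Let $\mathcal{M}$ be a $W^*$-algebra, $E\subset\mathcal{L}(\mathcal{M})$ a semilattice of projections, and define $\mathcal{S}:=\bigcup_{p\in E}Z(p\mathcal{M}p)\cap\mathcal{U}(\mathcal{M})$, where $Z(p\mathcal{M}p)$ is the center of $p\mathcal{M}p$. If $\mathcal{S}\subset\mathcal{U}(E)$, then $\mathcal{S}$ is an inverse semigroup (under multiplication in $\mathcal{M}$), and moreover $\mathcal{S}$ is a Clifford inverse semigroup.
   Context: $\mathcal{L}(\mathcal{M})$ is the set of orthogonal projections of $\mathcal{M}$, $\mathcal{U}(\mathcal{M})$ the set of partial isometries. A semilattice of projections is a subset $E\subset\mathcal{L}(\mathcal{M})$ of pairwise commuting projections closed under multiplication. $\mathcal{U}(E):=\{u\in\mathcal{U}(\mathcal{M}): u^*u\in E,\ uu^*\in E\}$. An inverse semigroup is a semigroup in which each $s$ has a unique $t$ with $sts=s$, $tst=t$; it is Clifford if its idempotents are central (commute with all its elements). *)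

theory Defs
  imports "HOL-Analysis.Analysis"
begin

text \<open>A complex C*-algebra structure on a real Banach algebra 'a is given by a complex
scalar multiplication scC (extending the real one) and an involution st.\<close>

definition cstar_algebra :: "(complex \<Rightarrow> 'a::{real_normed_algebra,banach} \<Rightarrow> 'a) \<Rightarrow> ('a \<Rightarrow> 'a) \<Rightarrow> bool"
  where "cstar_algebra scC st \<longleftrightarrow>
    (\<forall>r x. scC (complex_of_real r) x = r *\<^sub>R x) \<and>
    (\<forall>c x y. scC c (x + y) = scC c x + scC c y) \<and>
    (\<forall>c d x. scC (c + d) x = scC c x + scC d x) \<and>
    (\<forall>c d x. scC (c * d) x = scC c (scC d x)) \<and>
    (\<forall>c x y. scC c (x * y) = scC c x * y \<and> scC c (x * y) = x * scC c y) \<and>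
    (\<forall>c x. norm (scC c x) = cmod c * norm x) \<and>
    (\<forall>x. st (st x) = x) \<and>
    (\<forall>x y. st (x + y) = st x + st y) \<and>
    (\<forall>c x. st (scC c x) = scC (cnj c) (st x)) \<and>
    (\<forall>x y. st (x * y) = st y * st x) \<and>
    (\<forall>x. norm (st x * x) = (norm x)\<^sup>2)"

definition bounded_clinear_fun :: "(complex \<Rightarrow> 'a::real_normed_vector \<Rightarrow> 'a) \<Rightarrow> ('a \<Rightarrow> complex) \<Rightarrow> bool"
  where "bounded_clinear_fun scC f \<longleftrightarrow>
    (\<forall>x y. f (x + y) = f x + f y) \<and> (\<forall>c x. f (scC c x) = c * f x) \<and>
    (\<exists>K. \<forall>x. cmod (f x) \<le> K * norm x)"

text \<open>W*-algebra (Sakai): a C*-algebra that is a dual Banach space, i.e. there is a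
norm-closed complex subspace V of the dual such that the canonical map
x \<mapsto> (f \<mapsto> f x) is an isometric isomorphism from the algebra onto V*.\<close>

definition wstar_algebra :: "(complex \<Rightarrow> 'a::{real_normed_algebra,banach} \<Rightarrow> 'a) \<Rightarrow> ('a \<Rightarrow> 'a) \<Rightarrow> bool"
  where "wstar_algebra scC st \<longleftrightarrow> cstar_algebra scC st \<and>
    (\<exists>V :: ('a \<Rightarrow> complex) set.
       (\<forall>f\<in>V. bounded_clinear_fun scC f) \<and>
       (\<lambda>_. 0) \<in> V \<and>
       (\<forall>f\<in>V. \<forall>g\<in>V. (\<lambda>x. f x + g x) \<in> V) \<and>
       (\<forall>f\<in>V. \<forall>c. (\<lambda>x. c * f x) \<in> V) \<and>
       (\<forall>g. bounded_clinear_fun scC g \<longrightarrow>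
            (\<forall>e>0. \<exists>f\<in>V. onorm (\<lambda>x. g x - f x) < e) \<longrightarrow> g \<in> V) \<and>
       (\<forall>x. norm x = (SUP f\<in>{f\<in>V. onorm f \<le> 1}. cmod (f x))) \<and>
       (\<forall>\<phi> :: ('a \<Rightarrow> complex) \<Rightarrow> complex.
          (\<forall>f\<in>V. \<forall>g\<in>V. \<phi> (\<lambda>x. f x + g x) = \<phi> f + \<phi> g) \<longrightarrow>
          (\<forall>f\<in>V. \<forall>c. \<phi> (\<lambda>x. c * f x) = c * \<phi> f) \<longrightarrow>
          (\<exists>K. \<forall>f\<in>V. cmod (\<phi> f) \<le> K * onorm f) \<longrightarrow>
          (\<exists>x. \<forall>f\<in>V. \<phi> f = f x)))"

definition is_projection :: "('a \<Rightarrow> 'a) \<Rightarrow> 'a::semigroup_mult \<Rightarrow> bool"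
  where "is_projection st p \<longleftrightarrow> st p = p \<and> p * p = p"

definition partial_isometry :: "('a \<Rightarrow> 'a) \<Rightarrow> 'a::semigroup_mult \<Rightarrow> bool"
  where "partial_isometry st u \<longleftrightarrow> is_projection st (st u * u)"

definition projection_semilattice :: "('a \<Rightarrow> 'a) \<Rightarrow> 'a::semigroup_mult set \<Rightarrow> bool"
  where "projection_semilattice st E \<longleftrightarrow>
    (\<forall>p\<in>E. is_projection st p) \<and> (\<forall>p\<in>E. \<forall>q\<in>E. p * q = q * p \<and> p * q \<in> E)"

definition corner :: "'a::semigroup_mult \<Rightarrow> 'a set"
  where "corner p = {p * x * p | x. True}"

definition center_of :: "'a::semigroup_mult set \<Rightarrow> 'a set"
  where "center_of A = {z\<in>A. \<forall>y\<in>A. z * y = y * z}"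

definition U_of :: "('a \<Rightarrow> 'a) \<Rightarrow> 'a::semigroup_mult set \<Rightarrow> 'a set"
  where "U_of st E = {u. partial_isometry st u \<and> st u * u \<in> E \<and> u * st u \<in> E}"

definition inverse_semigroup :: "'a::semigroup_mult set \<Rightarrow> bool"
  where "inverse_semigroup S \<longleftrightarrow> (\<forall>s\<in>S. \<forall>t\<in>S. s * t \<in> S) \<and>
    (\<forall>s\<in>S. \<exists>!t. t \<in> S \<and> s * t * s = s \<and> t * s * t = t)"

definition clifford_semigroup :: "'a::semigroup_mult set \<Rightarrow> bool"
  where "clifford_semigroup S \<longleftrightarrow> inverse_semigroup S \<and>
    (\<forall>e\<in>S. e * e = e \<longrightarrow> (\<forall>s\<in>S. e * s = s * e))"

end

theory Submission
  imports Defs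
begin

text \<open>Every u \<in> S is central in a corner pMp with p \<in> E; for q \<in> E the element qp = pqp lies in
that corner, so u commutes with qp and hence with q. Since u^*u belongs to E, it follows that
S is closed under products (the product is central in the corner of the product projection),
that u^* \<in> S is an inverse of u, and that an idempotent e \<in> S equals e^*e \<in> E. Thus the
idempotents of S commute with all of S, which yields both uniqueness of inverses and the
Clifford property.\<close>

lemma inverse_semigroupI_commuting_idempotents:
  fixes S :: "'a::semigroup_mult set"
  assumes closed: "\<And>s t. s \<in> S \<Longrightarrow> t \<in> S \<Longrightarrow> s * t \<in> S"
    and regular: "\<And>s. s \<in> S \<Longrightarrow> \<exists>t\<in>S. s * t * s = s \<and> t * s * t = t"
    and idem_commute: "\<And>e f. e \<in> S \<Longrightarrow> f \<in> S \<Longrightarrow> e * e = e \<Longrightarrow> f * f = f \<Longrightarrow> e * f = f * e"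
  shows "inverse_semigroup S"
proof -
  have unique: "t = t'"
    if S: "s \<in> S" "t \<in> S" "t' \<in> S"
      and h1: "s * t * s = s" and h2: "t * s * t = t"
      and g1: "s * t' * s = s" and g2: "t' * s * t' = t'" for s t t'
  proof -
    have idem: "(s * t) * (s * t) = s * t" "(s * t') * (s * t') = s * t'"
        "(t * s) * (t * s) = t * s" "(t' * s) * (t' * s) = t' * s"
      using h1 h2 g1 g2 by (simp_all add: mult.assoc[symmetric])
    have c1: "(s * t) * (s * t') = (s * t') * (s * t)"
      and c2: "(t' * s) * (t * s) = (t * s) * (t' * s)"
      using idem_commute closed S idem by blast+
    have "t = t * ((s * t') * (s * t))" using h2 g1 by (metis mult.assoc)
    also have "\<dots> = (t * s * t) * s * t'" using c1 by (simp add: mult.assoc)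
    finally have A: "t = t * s * t'" using h2 by simp
    have "t' = ((t' * s) * (t * s)) * t'" using g2 h1 by (metis mult.assoc)
    also have "\<dots> = t * s * (t' * s * t')" using c2 by (simp add: mult.assoc)
    finally have B: "t' = t * s * t'" using g2 by simp
    show ?thesis using A B by simp
  qed
  show ?thesis
    unfolding inverse_semigroup_def using closed regular unique by (metis (no_types, lifting))
qed

locale proper_star_ring =
  fixes st :: "'a::ring \<Rightarrow> 'a"
  assumes star_star: "\<And>x. st (st x) = x"
    and star_add: "\<And>x y. st (x + y) = st x + st y"
    and star_mult: "\<And>x y. st (x * y) = st y * st x"
    and star_mult_self_eq_zero: "\<And>x. st x * x = 0 \<Longrightarrow> x = 0"
begin

lemma star_diff: "st (x - y) = st x - st y"
  by (metis add_diff_cancel diff_add_cancel star_add)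

lemma partial_isometry_iff: "partial_isometry st u \<longleftrightarrow> (st u * u) * (st u * u) = st u * u"
  by (simp add: partial_isometry_def is_projection_def star_mult star_star)

lemma partial_isometry_mult_star_mult:
  assumes "partial_isometry st u"
  shows "u * (st u * u) = u"
proof -
  let ?q = "st u * u"
  have qq: "?q * ?q = ?q" using assms by (simp add: partial_isometry_iff)
  define d where "d = u - u * ?q"
  have "st d * d = (st u - ?q * st u) * (u - u * ?q)"
    unfolding d_def star_diff star_mult star_star by (simp add: mult.assoc)
  also have "\<dots> = ?q - ?q * ?q - ?q * ?q + ?q * ?q * ?q"
    by (simp add: algebra_simps)
  also have "\<dots> = 0" using qq by (simp add: mult.assoc)
  finally have "d = 0" by (rule star_mult_self_eq_zero)
  then show ?thesis unfolding d_def by simp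
qed

lemma partial_isometry_star:
  assumes "partial_isometry st u"
  shows "partial_isometry st (st u)"
proof -
  have "st u * u * st u = st u"
    using arg_cong[OF partial_isometry_mult_star_mult[OF assms], of st]
    by (simp add: star_mult star_star mult.assoc)
  then show ?thesis
    unfolding partial_isometry_iff star_star by (metis mult.assoc)
qed

lemma star_mem_corner:
  assumes "is_projection st p" "u \<in> corner p"
  shows "st u \<in> corner p"
  using assms unfolding corner_def is_projection_def
  by (auto simp: star_mult mult.assoc)

lemma star_mem_center_corner:
  assumes p: "is_projection st p" and u: "u \<in> center_of (corner p)"
  shows "st u \<in> center_of (corner p)"
proof -
  have "st u * y = y * st u" if "y \<in> corner p" for y
  proof -
    have "u * st y = st y * u"
      using u star_mem_corner[OF p that] by (simp add: center_of_def)
    then show ?thesis by (metis star_mult star_star)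
  qed
  then show ?thesis using u star_mem_corner[OF p] by (simp add: center_of_def)
qed

end

lemma cstar_algebra_proper_star_ring:
  assumes "cstar_algebra scC st"
  shows "proper_star_ring st"
proof
  show "st x * x = 0 \<Longrightarrow> x = 0" for x
    using assms unfolding cstar_algebra_def
    by (metis norm_eq_zero power_zero_numeral zero_eq_power2)
qed (use assms in \<open>simp_all add: cstar_algebra_def\<close>)

lemma mem_corner_iff:
  fixes p :: "'a::semigroup_mult"
  assumes "p * p = p"
  shows "u \<in> corner p \<longleftrightarrow> p * u * p = u"
proof
  assume "u \<in> corner p"
  then obtain x where "u = p * x * p" by (auto simp: corner_def)
  with assms show "p * u * p = u" by (metis mult.assoc)
next
  assume "p * u * p = u"
  then show "u \<in> corner p" unfolding corner_def by (metis (mono_tags, lifting) mem_Collect_eq)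
qed

lemma mem_corner_mult_unit:
  fixes p :: "'a::semigroup_mult"
  assumes pp: "p * p = p" and "u \<in> corner p"
  shows "p * u = u" "u * p = u"
proof -
  have u: "p * u * p = u" using assms mem_corner_iff by blast
  show "p * u = u" by (metis u pp mult.assoc)
  show "u * p = u" by (metis u pp mult.assoc)
qed

lemma center_corner_commute:
  fixes p :: "'a::semigroup_mult"
  assumes pp: "p * p = p" and qp: "q * p = p * q" and u: "u \<in> center_of (corner p)"
  shows "u * q = q * u"
proof -
  have uc: "u \<in> corner p" using u by (simp add: center_of_def)
  have pqp: "p * q * p = q * p" using pp qp by (metis mult.assoc)
  have "p * (q * p) * p = q * p" using pqp pp by (simp add: mult.assoc)
  then have "q * p \<in> corner p" using mem_corner_iff[OF pp] by (simp add: mult.assoc)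
  then have com: "u * (q * p) = q * p * u" using u by (simp add: center_of_def)
  have "u * q = u * p * q" using mem_corner_mult_unit[OF pp uc] by simp
  also have "\<dots> = q * p * u" using com qp by (simp add: mult.assoc)
  also have "\<dots> = q * u" using mem_corner_mult_unit[OF pp uc] by (simp add: mult.assoc)
  finally show ?thesis .
qed

lemma mult_mem_center_corner:
  fixes p r :: "'a::semigroup_mult"
  assumes pp: "p * p = p" and rr: "r * r = r" and pr: "p * r = r * p"
    and u: "u \<in> center_of (corner p)" and v: "v \<in> center_of (corner r)"
  shows "u * v \<in> center_of (corner (p * r))"
proof -
  have prpr: "p * r * (p * r) = p * r" using pp rr pr by (metis mult.assoc)
  have uc: "u \<in> corner p" and vc: "v \<in> corner r" using u v by (auto simp: center_of_def)
  note pu = mem_corner_mult_unit[OF pp uc] and rv = mem_corner_mult_unit[OF rr vc]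
  have ur: "u * r = r * u" using center_corner_commute[OF pp pr[symmetric] u] .
  have vp: "v * p = p * v" using center_corner_commute[OF rr pr v] .
  have "p * r * (u * v) = u * v"
    using pu rv ur by (metis mult.assoc)
  moreover have "u * v * (p * r) = u * v"
    using pu rv vp by (metis mult.assoc)
  ultimately have "u * v \<in> corner (p * r)"
    using mem_corner_iff[OF prpr] by (simp add: mult.assoc)
  moreover have "u * v * y = y * (u * v)" if yc: "y \<in> corner (p * r)" for y
  proof -
    obtain z where y: "y = p * r * z * (p * r)" using yc unfolding corner_def by blast
    have "y = p * (r * z * r) * p" using y pr by (metis mult.assoc)
    then have "u * y = y * u" using u by (auto simp: center_of_def corner_def)
    moreover have "y = r * (p * z * p) * r" using y pr by (metis mult.assoc)
    then have "v * y = y * v" using v by (auto simp: center_of_def corner_def)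
    ultimately show ?thesis by (metis mult.assoc)
  qed
  ultimately show ?thesis by (simp add: center_of_def)
qed

definition central_partial_isometries :: "('a \<Rightarrow> 'a) \<Rightarrow> 'a::semigroup_mult set \<Rightarrow> 'a set"
  where "central_partial_isometries st E =
    (\<Union>p\<in>E. center_of (corner p) \<inter> {u. partial_isometry st u})"

locale central_partial_isometry_semigroup = proper_star_ring st
  for st :: "'a::ring \<Rightarrow> 'a" +
  fixes E :: "'a set"
  assumes semilattice: "projection_semilattice st E"
    and support_in_E: "central_partial_isometries st E \<subseteq> U_of st E"
begin

abbreviation "S \<equiv> central_partial_isometries st E"

lemma projection_mem: "p \<in> E \<Longrightarrow> is_projection st p"
  using semilattice by (simp add: projection_semilattice_def)

lemma idempotent_mem: "p \<in> E \<Longrightarrow> p * p = p"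
  using projection_mem by (simp add: is_projection_def)

lemma mult_mem: "p \<in> E \<Longrightarrow> q \<in> E \<Longrightarrow> p * q \<in> E"
  and mult_commute: "p \<in> E \<Longrightarrow> q \<in> E \<Longrightarrow> p * q = q * p"
  using semilattice by (auto simp: projection_semilattice_def)

lemma star_mult_self_mem: "u \<in> S \<Longrightarrow> st u * u \<in> E"
  using support_in_E by (auto simp: U_of_def)

lemma memE:
  assumes "u \<in> S"
  obtains p where "p \<in> E" "u \<in> center_of (corner p)" "partial_isometry st u"
  using assms by (auto simp: central_partial_isometries_def)

lemma commute_semilattice: "u \<in> S \<Longrightarrow> q \<in> E \<Longrightarrow> u * q = q * u"
  by (metis memE center_corner_commute idempotent_mem mult_commute)

lemma mult_closed:
  assumes u: "u \<in> S" and v: "v \<in> S"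
  shows "u * v \<in> S"
proof -
  obtain p where p: "p \<in> E" "u \<in> center_of (corner p)" "partial_isometry st u" using memE[OF u] .
  obtain r where r: "r \<in> E" "v \<in> center_of (corner r)" "partial_isometry st v" using memE[OF v] .
  have cen: "u * v \<in> center_of (corner (p * r))"
    using mult_mem_center_corner p r idempotent_mem mult_commute by blast
  have "st (u * v) * (u * v) = st v * (v * (st u * u))"
    using commute_semilattice[OF v star_mult_self_mem[OF u]] by (simp add: star_mult mult.assoc)
  also have "\<dots> = (st u * u) * (st v * v)"
    using mult_commute star_mult_self_mem u v by (metis mult.assoc)
  finally have "st (u * v) * (u * v) \<in> E"
    using mult_mem star_mult_self_mem u v by simp
  then have "partial_isometry st (u * v)"
    using idempotent_mem partial_isometry_iff by simp
  then show ?thesis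
    using cen mult_mem[OF p(1) r(1)] by (auto simp: central_partial_isometries_def)
qed

lemma star_closed:
  assumes "u \<in> S"
  shows "st u \<in> S"
proof -
  obtain p where p: "p \<in> E" "u \<in> center_of (corner p)" "partial_isometry st u"
    using memE[OF assms] .
  have "st u \<in> center_of (corner p)"
    using star_mem_center_corner[OF projection_mem[OF p(1)] p(2)] .
  then show ?thesis
    using p(1) partial_isometry_star[OF p(3)] by (auto simp: central_partial_isometries_def)
qed

lemma star_is_inverse:
  assumes "u \<in> S"
  shows "u * st u * u = u" "st u * u * st u = st u"
proof -
  have pi: "partial_isometry st u" using assms by (auto elim: memE)
  show "u * st u * u = u"
    using partial_isometry_mult_star_mult[OF pi] by (simp add: mult.assoc)
  show "st u * u * st u = st u"
    using partial_isometry_mult_star_mult[OF partial_isometry_star[OF pi]]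
    by (simp add: star_star mult.assoc)
qed

lemma idempotent_mem_semilattice:
  assumes e: "e \<in> S" and ee: "e * e = e"
  shows "e \<in> E"
proof -
  have "st e * e = (st e * e) * e" using ee by (simp add: mult.assoc)
  also have "\<dots> = e * (st e * e)"
    using commute_semilattice[OF e star_mult_self_mem[OF e]] by (simp add: mult.assoc)
  also have "\<dots> = e" using star_is_inverse(1)[OF e] by (simp add: mult.assoc)
  finally show ?thesis using star_mult_self_mem[OF e] by simp
qed

lemma idempotent_central: "e \<in> S \<Longrightarrow> e * e = e \<Longrightarrow> s \<in> S \<Longrightarrow> e * s = s * e"
  using commute_semilattice idempotent_mem_semilattice by metis

theorem clifford_semigroup_central_partial_isometries: "clifford_semigroup S"
proof -
  have "inverse_semigroup S"
  proof (rule inverse_semigroupI_commuting_idempotents)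
    show "\<exists>t\<in>S. s * t * s = s \<and> t * s * t = t" if "s \<in> S" for s
      using that star_closed star_is_inverse by blast
  qed (use mult_closed idempotent_central in blast)+
  then show ?thesis unfolding clifford_semigroup_def using idempotent_central by blast
qed

end

theorem proposition3p5:
  fixes scC :: "complex \<Rightarrow> 'a::{real_normed_algebra,banach} \<Rightarrow> 'a"
    and st :: "'a \<Rightarrow> 'a"
    and E :: "'a set"
  assumes "wstar_algebra scC st"
    and "projection_semilattice st E"
    and "(\<Union>p\<in>E. center_of (corner p) \<inter> {u. partial_isometry st u}) \<subseteq> U_of st E"
  shows "inverse_semigroup (\<Union>p\<in>E. center_of (corner p) \<inter> {u. partial_isometry st u})
    \<and> clifford_semigroup (\<Union>p\<in>E. center_of (corner p) \<inter> {u. partial_isometry st u})"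
proof -
  have "proper_star_ring st"
    using assms(1) cstar_algebra_proper_star_ring by (auto simp: wstar_algebra_def)
  then interpret central_partial_isometry_semigroup st E
    using assms(2,3)
    by (simp add: central_partial_isometry_semigroup_def
        central_partial_isometry_semigroup_axioms_def central_partial_isometries_def)
  show ?thesis
    using clifford_semigroup_central_partial_isometries
    unfolding clifford_semigroup_def central_partial_isometries_def by blast
qed

end
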